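(* Let $E$ be an Archimedean vector lattice equipped with a completely metrizable locally solid (linear) topology. Then every disjoint system of positive vectors of $E$ is countable if and only if $E$ has a weak unit and the countable sup property.
   Context: A locally solid vector lattice is a vector lattice with a linear topology having a base of zero neighborhoods consisting of solid sets. A disjoint system of positive vectors is a set of vectors $x\ge 0$ that are pairwise disjoint. A vector $e\ge 0$ is a weak unit if $|x|\wedge e=0$ implies $x=0$. A vector lattice has the countable sup property if every nonempty subset possessing a supremum contains a countable subset with the same supremum. *)

theory Defs
  imports "HOL-Analysis.Analysis"
begin

text \<open>Vector lattices (Riesz spaces) are modelled as types of sort
  {ordered_real_vector, lattice}: a real ordered vector space whose order is a lattice.\<close>

definition vabs :: "'a::{ordered_real_vector, lattice} \<Rightarrow> 'a" where
  "vabs x = sup x (- x)"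

definition archimedean_vl :: "'a::{ordered_real_vector, lattice} itself \<Rightarrow> bool" where
  "archimedean_vl _ \<longleftrightarrow>
     (\<forall>x y::'a. 0 \<le> x \<and> 0 \<le> y \<and> (\<forall>n::nat. of_nat n *\<^sub>R x \<le> y) \<longrightarrow> x = 0)"

definition solid :: "'a::{ordered_real_vector, lattice} set \<Rightarrow> bool" where
  "solid S \<longleftrightarrow> (\<forall>x y. x \<in> S \<and> vabs y \<le> vabs x \<longrightarrow> y \<in> S)"

definition linear_topology :: "'a::real_vector topology \<Rightarrow> bool" where
  "linear_topology T \<longleftrightarrow> topspace T = UNIV \<and>
     continuous_map (prod_topology T T) T (\<lambda>(x, y). x + y) \<and>
     continuous_map (prod_topology euclideanreal T) T (\<lambda>(c, x). c *\<^sub>R x)"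

definition locally_solid :: "'a::{ordered_real_vector, lattice} topology \<Rightarrow> bool" where
  "locally_solid T \<longleftrightarrow> linear_topology T \<and>
     (\<forall>U. openin T U \<and> 0 \<in> U \<longrightarrow>
        (\<exists>V. solid V \<and> V \<subseteq> U \<and> (\<exists>W. openin T W \<and> 0 \<in> W \<and> W \<subseteq> V)))"

definition disjoint_system :: "'a::{ordered_real_vector, lattice} set \<Rightarrow> bool" where
  "disjoint_system D \<longleftrightarrow> (\<forall>x\<in>D. 0 \<le> x) \<and> (\<forall>x\<in>D. \<forall>y\<in>D. x \<noteq> y \<longrightarrow> inf x y = 0)"

definition weak_unit :: "'a::{ordered_real_vector, lattice} \<Rightarrow> bool" where
  "weak_unit e \<longleftrightarrow> 0 \<le> e \<and> (\<forall>x. inf (vabs x) e = 0 \<longrightarrow> x = 0)"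

definition is_sup_of :: "'a::order set \<Rightarrow> 'a \<Rightarrow> bool" where
  "is_sup_of A s \<longleftrightarrow> (\<forall>a\<in>A. a \<le> s) \<and> (\<forall>u. (\<forall>a\<in>A. a \<le> u) \<longrightarrow> s \<le> u)"

definition countable_sup_property :: "'a::{ordered_real_vector, lattice} itself \<Rightarrow> bool" where
  "countable_sup_property _ \<longleftrightarrow>
     (\<forall>(A::'a set) s. A \<noteq> {} \<and> is_sup_of A s \<longrightarrow>
        (\<exists>B. B \<subseteq> A \<and> countable B \<and> is_sup_of B s))"

end

theory Submission
  imports Defs "HOL-Library.Lattice_Algebras"
begin

(* If every disjoint system is countable, take a maximal one, (v n).  Complete metrizability
   allows coefficients c n > 0 for which the series of the c n v n converges to some l; the
   partial sums dominate each c n v n, so by local solidity a vector disjoint from the positive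
   part of l is disjoint from every v n, and the positive part of l is a weak unit.  For the
   countable sup property, the differences s - a of a supremum s and the elements a have
   infimum 0; for each m, a maximal disjoint system selects countably many of them whose lower
   bounds lie below (s - a0)/(m+1) up to a part disjoint from it, and the Archimedean property
   makes the union of these countable selections still have infimum 0.

   Conversely, meeting an uncountable disjoint system with a weak unit e gives an uncountable
   disjoint system X of nonzero vectors below e.  The vectors of [0, e] disjoint from all but
   one member of X have supremum e, by the Archimedean property, whereas a countable subfamily
   misses some x in X and is therefore bounded by e - x. *)

interpretation vector_lattice:
  lattice_ab_group_add_abs vabs "(+)" "0::'a::{ordered_real_vector, lattice}" "(-)" uminus
    "(\<le>)" "(<)" inf sup
  by unfold_locales (simp add: vabs_def)

lemma scaleR_inf_distrib:
  fixes a b :: "'a::{ordered_real_vector, lattice}"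
  assumes "0 \<le> t"
  shows "t *\<^sub>R inf a b = inf (t *\<^sub>R a) (t *\<^sub>R b)"
proof (cases "t = 0")
  case False
  with assms have t: "0 < t" by simp
  have "inverse t *\<^sub>R inf (t *\<^sub>R a) (t *\<^sub>R b) \<le> inverse t *\<^sub>R (t *\<^sub>R x)" if "x \<in> {a, b}" for x
    using t that by (intro scaleR_left_mono) auto
  with t have "inverse t *\<^sub>R inf (t *\<^sub>R a) (t *\<^sub>R b) \<le> inf a b" by simp
  then have "t *\<^sub>R (inverse t *\<^sub>R inf (t *\<^sub>R a) (t *\<^sub>R b)) \<le> t *\<^sub>R inf a b"
    using t by (intro scaleR_left_mono) auto
  with t have "inf (t *\<^sub>R a) (t *\<^sub>R b) \<le> t *\<^sub>R inf a b" by simp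
  moreover have "t *\<^sub>R inf a b \<le> inf (t *\<^sub>R a) (t *\<^sub>R b)"
    using assms by (simp add: scaleR_left_mono)
  ultimately show ?thesis by (rule order.antisym[rotated])
qed simp

lemma inf_pos_part_neg_part:
  fixes z :: "'a::{ordered_real_vector, lattice}"
  shows "inf (sup z 0) (sup (- z) 0) = 0"
proof -
  have "sup z 0 + inf z 0 = z" using vector_lattice.add_eq_inf_sup[of z 0] by simp
  then have "sup z 0 = z + - inf z 0" by (metis add_diff_cancel diff_conv_add_uminus)
  then have "inf (sup z 0) (- inf z 0) = inf (z + - inf z 0) (0 + - inf z 0)"
    by simp
  also have "\<dots> = inf z 0 + - inf z 0"
    by (rule vector_lattice.add_inf_distrib_right[symmetric])
  also have "\<dots> = 0" by (rule add.right_inverse)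
  moreover have "sup (- z) 0 = - inf z 0"
    using vector_lattice.neg_inf_eq_sup[of z 0] by simp
  ultimately show ?thesis by (simp only:)
qed

lemma inf_eq_0_mono:
  fixes a b x y :: "'a::{ordered_real_vector, lattice}"
  assumes "inf a b = 0" "0 \<le> x" "x \<le> a" "0 \<le> y" "y \<le> b"
  shows "inf x y = 0"
proof (rule antisym)
  show "inf x y \<le> 0" using assms inf_mono by metis
qed (use assms in simp)

lemma inf_scaleR_left_eq_0:
  fixes a b :: "'a::{ordered_real_vector, lattice}"
  assumes "inf a b = 0" "0 \<le> a" "0 \<le> b" "0 \<le> t"
  shows "inf (t *\<^sub>R a) b = 0"
proof (rule inf_eq_0_mono)
  define k where "k = max t 1"
  show "inf (k *\<^sub>R a) (k *\<^sub>R b) = 0"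
    using scaleR_inf_distrib[of k a b] assms(1) by (simp add: k_def)
  show "t *\<^sub>R a \<le> k *\<^sub>R a" "b \<le> k *\<^sub>R b"
    using assms scaleR_right_mono[of 1 k b] by (auto simp: k_def intro: scaleR_right_mono)
qed (use assms in \<open>auto simp: scaleR_nonneg_nonneg\<close>)

lemma inf_add_nonneg_le:
  fixes x y r :: "'a::{ordered_real_vector, lattice}"
  assumes "0 \<le> r"
  shows "inf y (x + r) \<le> inf y x + r"
proof -
  have "inf y (x + r) \<le> inf (y + r) (x + r)"
    using assms by (intro inf_mono) (simp_all add: add_increasing2)
  also have "\<dots> = inf y x + r" by (simp add: vector_lattice.add_inf_distrib_right)
  finally show ?thesis .
qed

lemma inf_le_inf_pos_part_diff_add:
  fixes p c b :: "'a::{ordered_real_vector, lattice}"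
  assumes "0 \<le> b"
  shows "inf p c \<le> inf p (sup (c - b) 0) + b"
proof -
  have "inf p c - b \<le> p"
    using assms by (simp add: diff_le_eq le_infI1 add_increasing2)
  moreover have "inf p c - b \<le> sup (c - b) 0"
    by (meson diff_right_mono inf.cobounded2 order_trans sup.cobounded1)
  ultimately have "inf p c - b \<le> inf p (sup (c - b) 0)" by simp
  then show ?thesis by (simp only: diff_le_eq)
qed

lemma eq_0_if_disjoint_le_scaleR:
  fixes p c :: "'a::{ordered_real_vector, lattice}"
  assumes "inf p c = 0" "0 \<le> p" "0 \<le> c" "0 \<le> t" "p \<le> t *\<^sub>R c"
  shows "p = 0"
proof -
  have "inf (t *\<^sub>R c) p = 0"
    using assms(1-4) by (intro inf_scaleR_left_eq_0) (simp_all add: inf_commute)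
  with assms(5) show ?thesis by (simp add: inf_absorb2)
qed

lemma inf_le_vabs_diff_if_disjoint_pos_part:
  fixes y z s l :: "'a::{ordered_real_vector, lattice}"
  assumes "inf y (sup l 0) = 0" "z \<le> s"
  shows "inf y z \<le> vabs (s - l)"
proof -
  have "z \<le> l + vabs (s - l)"
    using assms(2) vector_lattice.abs_ge_self[of "s - l"] by (simp add: diff_le_eq add.commute)
  also have "\<dots> \<le> sup l 0 + vabs (s - l)" by (intro add_right_mono) simp
  finally have "inf y z \<le> inf y (sup l 0 + vabs (s - l))" by (rule inf_mono[OF order_refl])
  also have "\<dots> \<le> vabs (s - l)" using inf_add_nonneg_le[of "vabs (s - l)" y "sup l 0"] assms(1) by simp
  finally show ?thesis .
qed

lemma archimedean_vlD:
  fixes x y :: "'a::{ordered_real_vector, lattice}"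
  assumes "archimedean_vl TYPE('a)" "0 \<le> x" "0 \<le> y" "\<And>n::nat. of_nat n *\<^sub>R x \<le> y"
  shows "x = 0"
  using assms unfolding archimedean_vl_def by blast

lemma disjoint_system_nonneg: "disjoint_system D \<Longrightarrow> x \<in> D \<Longrightarrow> 0 \<le> x"
  unfolding disjoint_system_def by blast

lemma disjoint_system_inf_eq_0:
  "disjoint_system D \<Longrightarrow> x \<in> D \<Longrightarrow> y \<in> D \<Longrightarrow> x \<noteq> y \<Longrightarrow> inf x y = 0"
  unfolding disjoint_system_def by blast

lemma ex_maximal_disjoint_system:
  fixes S :: "'a::{ordered_real_vector, lattice} set"
  obtains D where "disjoint_system D" "D \<subseteq> S"
    "\<And>w. w \<in> S \<Longrightarrow> 0 \<le> w \<Longrightarrow> \<forall>x\<in>D. inf w x = 0 \<Longrightarrow> w = 0"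
proof -
  define A where "A = {D. disjoint_system D \<and> D \<subseteq> S}"
  have "\<exists>M\<in>A. \<forall>X\<in>A. M \<subseteq> X \<longrightarrow> X = M"
  proof (rule subset_Zorn')
    fix C assume "subset.chain A C"
    then have CA: "C \<subseteq> A" and chain: "\<forall>X\<in>C. \<forall>Y\<in>C. X \<subseteq> Y \<or> Y \<subseteq> X"
      unfolding subset.chain_def by auto
    show "\<Union>C \<in> A"
      unfolding A_def disjoint_system_def
    proof (intro CollectI conjI ballI impI)
      fix x y assume "x \<in> \<Union>C" "y \<in> \<Union>C" "x \<noteq> y"
      then obtain Z where "Z \<in> C" "x \<in> Z" "y \<in> Z"
        using chain by blast
      then show "inf x y = 0"
        using CA \<open>x \<noteq> y\<close> unfolding A_def disjoint_system_def by blast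
    qed (use CA in \<open>auto simp: A_def disjoint_system_def\<close>)
  qed
  then obtain D where "D \<in> A" and maximal: "\<forall>X\<in>A. D \<subseteq> X \<longrightarrow> X = D" by blast
  then have D: "disjoint_system D" "D \<subseteq> S" unfolding A_def by auto
  show thesis
  proof (rule that[OF D])
    fix w assume w: "w \<in> S" "0 \<le> w" "\<forall>x\<in>D. inf w x = 0"
    show "w = 0"
    proof (cases "w \<in> D")
      case False
      have "insert w D \<in> A"
        using D w unfolding A_def disjoint_system_def by (auto simp: inf_commute)
      with maximal False show ?thesis by blast
    qed (use w in \<open>metis inf.idem\<close>)
  qed
qed

lemma countable_subset_lower_bounds_disjoint:
  fixes B :: "'a::{ordered_real_vector, lattice} set"
  assumes ccc: "\<forall>D::'a set. disjoint_system D \<longrightarrow> countable D"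
    and B_nonneg: "\<forall>b\<in>B. 0 \<le> b" and B_inf: "\<forall>v. (\<forall>b\<in>B. v \<le> b) \<longrightarrow> v \<le> 0"
  shows "\<exists>C\<subseteq>B. countable C \<and> (\<forall>v. (\<forall>b\<in>C. v \<le> b) \<longrightarrow> inf (sup (v - c) 0) c \<le> 0)"
proof -
  define S where "S = {w. \<exists>b\<in>B. inf w (sup (b - c) 0) = 0}"
  \<comment> \<open>For a lower bound v of the selected C, the part p of v above c is disjoint from F; by
    maximality, p is then disjoint from every (c - b)^+, which squeezes inf p c below each b.\<close>
  obtain F where F: "disjoint_system F" "F \<subseteq> S"
    and F_max: "\<And>w. w \<in> S \<Longrightarrow> 0 \<le> w \<Longrightarrow> \<forall>x\<in>F. inf w x = 0 \<Longrightarrow> w = 0"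
    using ex_maximal_disjoint_system[of S] by blast
  have "\<forall>w\<in>F. \<exists>b. b \<in> B \<and> inf w (sup (b - c) 0) = 0"
    using F(2) unfolding S_def by blast
  then obtain \<beta> where \<beta>: "\<And>w. w \<in> F \<Longrightarrow> \<beta> w \<in> B \<and> inf w (sup (\<beta> w - c) 0) = 0"
    by metis
  have F_nonneg: "0 \<le> x" if "x \<in> F" for x
    using F(1) that by (rule disjoint_system_nonneg)
  have "inf (sup (v - c) 0) c \<le> 0" if v: "\<forall>b\<in>\<beta> ` F. v \<le> b" for v
  proof -
    define p where "p = sup (v - c) 0"
    have p_nonneg: "0 \<le> p" unfolding p_def by simp
    have p_F: "inf p x = 0" if "x \<in> F" for x
    proof (rule inf_eq_0_mono[OF _ p_nonneg _ F_nonneg[OF that] order_refl])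
      show "inf (sup (\<beta> x - c) 0) x = 0" using \<beta>[OF that] by (simp add: inf_commute)
      show "p \<le> sup (\<beta> x - c) 0"
        using v that unfolding p_def by (intro sup_mono diff_right_mono) auto
    qed
    have p_disjoint: "inf p (sup (c - b) 0) = 0" if "b \<in> B" for b
    proof (rule F_max)
      have "inf (inf p (sup (c - b) 0)) (sup (b - c) 0) = 0"
        by (rule inf_eq_0_mono[OF inf_pos_part_neg_part[of "c - b", unfolded minus_diff_eq]])
          (simp_all add: p_nonneg)
      with that show "inf p (sup (c - b) 0) \<in> S" unfolding S_def by blast
      show "\<forall>x\<in>F. inf (inf p (sup (c - b) 0)) x = 0"
      proof
        fix x assume "x \<in> F"
        show "inf (inf p (sup (c - b) 0)) x = 0"
          by (rule inf_eq_0_mono[OF p_F[OF \<open>x \<in> F\<close>]])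
            (simp_all add: p_nonneg F_nonneg[OF \<open>x \<in> F\<close>])
      qed
    qed (simp add: p_nonneg)
    have "inf p c \<le> b" if "b \<in> B" for b
      using inf_le_inf_pos_part_diff_add[of b p c] p_disjoint[OF that] B_nonneg that by simp
    with B_inf show ?thesis unfolding p_def by blast
  qed
  moreover have "countable (\<beta> ` F)" using ccc F(1) by blast
  moreover have "\<beta> ` F \<subseteq> B" using \<beta> by blast
  ultimately show ?thesis by blast
qed

lemma countable_subset_inf_eq_0:
  fixes B :: "'a::{ordered_real_vector, lattice} set"
  assumes arch: "archimedean_vl TYPE('a)"
    and ccc: "\<forall>D::'a set. disjoint_system D \<longrightarrow> countable D"
    and "b0 \<in> B" and B_nonneg: "\<forall>b\<in>B. 0 \<le> b" and B_inf: "\<forall>v. (\<forall>b\<in>B. v \<le> b) \<longrightarrow> v \<le> 0"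
  shows "\<exists>C\<subseteq>B. countable C \<and> (\<forall>v. (\<forall>b\<in>C. v \<le> b) \<longrightarrow> v \<le> 0)"
proof -
  define c where "c m = inverse (real (Suc m)) *\<^sub>R b0" for m
  have b0_nonneg: "0 \<le> b0" using \<open>b0 \<in> B\<close> B_nonneg by blast
  have c_nonneg: "0 \<le> c m" for m
    unfolding c_def using b0_nonneg by (intro scaleR_nonneg_nonneg) simp_all
  have c_mult: "real (Suc m) *\<^sub>R c m = b0" for m unfolding c_def by simp
  have "\<forall>m. \<exists>C. C \<subseteq> B \<and> countable C \<and>
      (\<forall>v. (\<forall>b\<in>C. v \<le> b) \<longrightarrow> inf (sup (v - c m) 0) (c m) \<le> 0)"
    using countable_subset_lower_bounds_disjoint[OF ccc B_nonneg B_inf] by blast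
  then obtain C where C: "\<And>m. C m \<subseteq> B \<and> countable (C m) \<and>
      (\<forall>v. (\<forall>b\<in>C m. v \<le> b) \<longrightarrow> inf (sup (v - c m) 0) (c m) \<le> 0)"
    by metis
  have "v \<le> 0" if v: "\<forall>b\<in>insert b0 (\<Union>m. C m). v \<le> b" for v
  proof -
    have sup_le: "sup v 0 \<le> c m" for m
    proof -
      define p where "p = sup (v - c m) 0"
      have p_nonneg: "0 \<le> p" unfolding p_def by simp
      have "inf p (c m) \<le> 0" using C[of m] v unfolding p_def by blast
      then have disjoint: "inf p (c m) = 0" using p_nonneg c_nonneg[of m] by (simp add: antisym)
      have "p \<le> real (Suc m) *\<^sub>R c m"
        using v b0_nonneg c_nonneg[of m] unfolding c_mult p_def
        by (simp add: diff_le_eq add_increasing2)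
      then have "p = 0"
        by (rule eq_0_if_disjoint_le_scaleR[OF disjoint p_nonneg c_nonneg[of m], rotated]) simp
      with c_nonneg[of m] show ?thesis unfolding p_def by (metis diff_le_0_iff_le sup.bounded_iff sup.cobounded1)
    qed
    have "of_nat n *\<^sub>R sup v 0 \<le> b0" for n
    proof (cases n)
      case (Suc m)
      have "of_nat n *\<^sub>R sup v 0 \<le> of_nat n *\<^sub>R c m"
        using sup_le by (intro scaleR_left_mono) simp_all
      with Suc c_mult show ?thesis by simp
    qed (simp add: b0_nonneg)
    then have "sup v 0 = 0" using archimedean_vlD[OF arch _ b0_nonneg] by simp
    then show "v \<le> 0" by (metis sup.cobounded1)
  qed
  moreover have "insert b0 (\<Union>m. C m) \<subseteq> B" using \<open>b0 \<in> B\<close> C by blast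
  moreover have "countable (insert b0 (\<Union>m. C m))" using C by blast
  ultimately show ?thesis by blast
qed

lemma countable_sup_property_if_disjoint_systems_countable:
  assumes arch: "archimedean_vl TYPE('a::{ordered_real_vector, lattice})"
    and ccc: "\<forall>D::'a set. disjoint_system D \<longrightarrow> countable D"
  shows "countable_sup_property TYPE('a)"
  unfolding countable_sup_property_def
proof (intro allI impI)
  fix A :: "'a set" and s assume "A \<noteq> {} \<and> is_sup_of A s"
  then obtain a0 where "a0 \<in> A" and upper: "\<forall>a\<in>A. a \<le> s"
    and least: "\<forall>u. (\<forall>a\<in>A. a \<le> u) \<longrightarrow> s \<le> u"
    unfolding is_sup_of_def by blast
  have "s - a0 \<in> (\<lambda>a. s - a) ` A" using \<open>a0 \<in> A\<close> by blast
  moreover have "\<forall>b\<in>(\<lambda>a. s - a) ` A. 0 \<le> b" using upper by auto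
  moreover have "\<forall>v. (\<forall>b\<in>(\<lambda>a. s - a) ` A. v \<le> b) \<longrightarrow> v \<le> 0"
  proof (intro allI impI)
    fix v assume "\<forall>b\<in>(\<lambda>a. s - a) ` A. v \<le> b"
    then have "\<forall>a\<in>A. a \<le> s - v" by (auto simp: le_diff_eq algebra_simps)
    with least have "s \<le> s - v" by blast
    then show "v \<le> 0" by (simp add: le_diff_eq)
  qed
  ultimately have "\<exists>C\<subseteq>(\<lambda>a. s - a) ` A. countable C \<and> (\<forall>v. (\<forall>c\<in>C. v \<le> c) \<longrightarrow> v \<le> 0)"
    by (rule countable_subset_inf_eq_0[OF arch ccc])
  then obtain C where C: "C \<subseteq> (\<lambda>a. s - a) ` A" "countable C"
    and C_inf: "\<forall>v. (\<forall>c\<in>C. v \<le> c) \<longrightarrow> v \<le> 0"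
    by blast
  define A' where "A' = {a\<in>A. s - a \<in> C}"
  have "A' \<subseteq> (\<lambda>c. s - c) ` C" unfolding A'_def by force
  then have "countable A'" using C(2) countable_subset by blast
  moreover have "is_sup_of A' s" unfolding is_sup_of_def
  proof (intro conjI allI impI ballI)
    show "a \<le> s" if "a \<in> A'" for a using that upper unfolding A'_def by blast
    fix u assume "\<forall>a\<in>A'. a \<le> u"
    then have "\<forall>c\<in>C. s - u \<le> c" using C(1) unfolding A'_def by (auto intro: diff_left_mono)
    with C_inf have "s - u \<le> 0" by blast
    then show "s \<le> u" by simp
  qed
  moreover have "A' \<subseteq> A" unfolding A'_def by blast
  ultimately show "\<exists>B\<subseteq>A. countable B \<and> is_sup_of B s" by blast
qed

lemma eq_0_if_inf_multiples_le:
  fixes z e u :: "'a::{ordered_real_vector, lattice}"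
  assumes arch: "archimedean_vl TYPE('a)" and "0 \<le> z" "0 \<le> e"
    and z_le: "z \<le> sup (e - u) 0" and bounded: "\<And>k::nat. inf e (of_nat k *\<^sub>R z) \<le> u"
  shows "z = 0"
proof (rule archimedean_vlD[OF arch \<open>0 \<le> z\<close> \<open>0 \<le> e\<close>])
  have step: "z + inf e (of_nat k *\<^sub>R z) \<le> e" for k :: nat
  proof -
    have "e - u \<le> e - inf e (of_nat k *\<^sub>R z)"
      using bounded[of k] by (rule diff_left_mono)
    moreover have "0 \<le> e - inf e (of_nat k *\<^sub>R z)"
      by (simp only: diff_ge_0_iff_ge inf.cobounded1)
    ultimately have "z \<le> e - inf e (of_nat k *\<^sub>R z)"
      using z_le by (meson le_supI order_trans)
    then show ?thesis by (simp only: le_diff_eq)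
  qed
  fix n :: nat
  show "of_nat n *\<^sub>R z \<le> e"
  proof (induction n)
    case (Suc n)
    then have "inf e (of_nat n *\<^sub>R z) = of_nat n *\<^sub>R z" by (simp add: inf_absorb2)
    with step[of n] show ?case by (simp add: scaleR_left_distrib add.commute)
  qed (simp add: \<open>0 \<le> e\<close>)
qed

definition singly_supported :: "'a::{ordered_real_vector, lattice} set \<Rightarrow> 'a \<Rightarrow> 'a set" where
  "singly_supported X e = {y. 0 \<le> y \<and> y \<le> e \<and> (\<exists>i\<in>X. \<forall>j\<in>X - {i}. inf y j = 0)}"

lemma inf_scaleR_mem_singly_supported:
  fixes z e :: "'a::{ordered_real_vector, lattice}"
  assumes "disjoint_system X" "i \<in> X" "\<forall>j\<in>X - {i}. inf z j = 0" "0 \<le> z" "0 \<le> e" "0 \<le> t"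
  shows "inf e (t *\<^sub>R z) \<in> singly_supported X e"
  unfolding singly_supported_def
proof (intro CollectI conjI bexI[OF _ \<open>i \<in> X\<close>] ballI)
  fix j assume j: "j \<in> X - {i}"
  have "0 \<le> j" using assms(1) j by (simp add: disjoint_system_nonneg)
  then have "inf (t *\<^sub>R z) j = 0"
    using assms j by (intro inf_scaleR_left_eq_0) auto
  then show "inf (inf e (t *\<^sub>R z)) j = 0"
    by (rule inf_eq_0_mono) (use assms \<open>0 \<le> j\<close> in \<open>simp_all add: scaleR_nonneg_nonneg\<close>)
qed (use assms in \<open>simp_all add: scaleR_nonneg_nonneg\<close>)

lemma is_sup_of_singly_supported:
  fixes e :: "'a::{ordered_real_vector, lattice}"
  assumes arch: "archimedean_vl TYPE('a)" and X: "disjoint_system X" "X \<noteq> {}" and "0 \<le> e"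
  shows "is_sup_of (singly_supported X e) e"
  unfolding is_sup_of_def
proof (intro conjI ballI allI impI)
  show "y \<le> e" if "y \<in> singly_supported X e" for y
    using that unfolding singly_supported_def by blast
  fix u assume upper: "\<forall>y\<in>singly_supported X e. y \<le> u"
  have X_nonneg: "0 \<le> i" if "i \<in> X" for i
    using X(1) that by (rule disjoint_system_nonneg)
  have bounded: "inf e (of_nat k *\<^sub>R z) \<le> u"
    if "i \<in> X" "\<forall>j\<in>X - {i}. inf z j = 0" "0 \<le> z" for i z and k :: nat
    using upper inf_scaleR_mem_singly_supported[OF X(1) that \<open>0 \<le> e\<close>] by simp
  define w where "w = sup (e - u) 0"
  have w_nonneg: "0 \<le> w" unfolding w_def by simp
  have w_disjoint: "inf w i = 0" if "i \<in> X" for i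
  proof (rule eq_0_if_inf_multiples_le[OF arch _ \<open>0 \<le> e\<close>])
    show "0 \<le> inf w i" using w_nonneg X_nonneg[OF that] by simp
    show "inf w i \<le> sup (e - u) 0" unfolding w_def by simp
    fix k :: nat
    have "\<forall>j\<in>X - {i}. inf i j = 0" using disjoint_system_inf_eq_0[OF X(1) that] by auto
    then have "inf e (of_nat k *\<^sub>R i) \<le> u" using bounded that X_nonneg by blast
    moreover have "inf e (of_nat k *\<^sub>R inf w i) \<le> inf e (of_nat k *\<^sub>R i)"
      by (intro inf_mono order_refl scaleR_left_mono) simp_all
    ultimately show "inf e (of_nat k *\<^sub>R inf w i) \<le> u" by (rule order_trans[rotated])
  qed
  obtain i where "i \<in> X" using X(2) by blast
  have "w = 0"
  proof (rule eq_0_if_inf_multiples_le[OF arch w_nonneg \<open>0 \<le> e\<close>])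
    show "w \<le> sup (e - u) 0" unfolding w_def ..
    show "inf e (of_nat k *\<^sub>R w) \<le> u" for k :: nat
      using bounded[OF \<open>i \<in> X\<close> _ w_nonneg] w_disjoint by blast
  qed
  then show "e \<le> u" unfolding w_def by (metis sup.cobounded1 diff_le_0_iff_le)
qed

lemma not_is_sup_of_countable_singly_supported:
  fixes e :: "'a::{ordered_real_vector, lattice}"
  assumes X: "disjoint_system X" "\<not> countable X" "\<forall>x\<in>X. x \<le> e \<and> x \<noteq> 0"
    and B: "B \<subseteq> singly_supported X e" "countable B"
  shows "\<not> is_sup_of B e"
proof
  assume sup_B: "is_sup_of B e"
  have "\<forall>y\<in>B. \<exists>i\<in>X. \<forall>j\<in>X - {i}. inf y j = 0"
    using B(1) unfolding singly_supported_def by blast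
  then obtain support where support: "\<And>y. y \<in> B \<Longrightarrow> \<forall>j\<in>X - {support y}. inf y j = 0"
    by metis
  have "\<not> X \<subseteq> support ` B" using X(2) B(2) countable_subset by blast
  then obtain j where j: "j \<in> X" "j \<notin> support ` B" by blast
  have "y \<le> e - j" if "y \<in> B" for y
  proof -
    have "inf y j = 0" using support[OF that] j that by blast
    then have "y + j = sup y j" using vector_lattice.add_eq_inf_sup[of y j] by simp
    also have "\<dots> \<le> e" using that B(1) X(3) j unfolding singly_supported_def by auto
    finally show ?thesis by (simp add: le_diff_eq)
  qed
  with sup_B have "e \<le> e - j" unfolding is_sup_of_def by blast
  moreover have "0 \<le> j" using X(1) j(1) by (rule disjoint_system_nonneg)
  ultimately show False using X(3) j by (simp add: le_diff_eq antisym)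
qed

lemma uncountable_disjoint_system_below_weak_unit:
  fixes e :: "'a::{ordered_real_vector, lattice}" and D :: "'a set"
  assumes e: "weak_unit e" and D: "disjoint_system D" "\<not> countable D"
  obtains X where "disjoint_system X" "\<not> countable X" "\<forall>x\<in>X. x \<le> e \<and> x \<noteq> 0"
proof -
  define X where "X = (\<lambda>d. inf d e) ` (D - {0})"
  have e_nonneg: "0 \<le> e" using e unfolding weak_unit_def by blast
  have D_nonneg: "0 \<le> d" if "d \<in> D" for d using D(1) that by (rule disjoint_system_nonneg)
  have nonzero: "inf d e \<noteq> 0" if "d \<in> D - {0}" for d
  proof
    assume "inf d e = 0"
    with D_nonneg[of d] that have "inf (vabs d) e = 0" by simp
    with e that show False unfolding weak_unit_def by blast
  qed
  have disjoint: "inf (inf d e) (inf d' e) = 0" if "d \<in> D" "d' \<in> D" "d \<noteq> d'" for d d'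
  proof (rule inf_eq_0_mono[of d d'])
    show "inf d d' = 0" using D(1) that by (rule disjoint_system_inf_eq_0)
  qed (use D_nonneg that e_nonneg in simp_all)
  have "inj_on (\<lambda>d. inf d e) (D - {0})"
  proof (rule inj_onI, rule ccontr)
    fix d d' assume d: "d \<in> D - {0}" "d' \<in> D - {0}" "inf d e = inf d' e" "d \<noteq> d'"
    then have "inf d e = 0" using disjoint[of d d'] by simp
    with nonzero d(1) show False by blast
  qed
  then have "countable (D - {0})" if "countable X"
    using that unfolding X_def by (rule countable_image_inj_on[rotated])
  with D(2) have "\<not> countable X" by auto
  moreover have "disjoint_system X"
    unfolding disjoint_system_def X_def
  proof (intro conjI ballI impI)
    fix x y assume "x \<in> (\<lambda>d. inf d e) ` (D - {0})" "y \<in> (\<lambda>d. inf d e) ` (D - {0})" "x \<noteq> y"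
    then obtain d d' where "d \<in> D" "d' \<in> D" "x = inf d e" "y = inf d' e" "d \<noteq> d'" by blast
    then show "inf x y = 0" using disjoint[of d d'] by simp
  qed (use D_nonneg e_nonneg in auto)
  moreover have "\<forall>x\<in>X. x \<le> e \<and> x \<noteq> 0" unfolding X_def using nonzero by simp
  ultimately show thesis using that by blast
qed

lemma disjoint_systems_countable_if_weak_unit:
  fixes e :: "'a::{ordered_real_vector, lattice}" and D :: "'a set"
  assumes arch: "archimedean_vl TYPE('a)" and e: "weak_unit e"
    and csp: "countable_sup_property TYPE('a)" and D: "disjoint_system D"
  shows "countable D"
proof (rule ccontr)
  assume "\<not> countable D"
  then obtain X where X: "disjoint_system X" "\<not> countable X" "\<forall>x\<in>X. x \<le> e \<and> x \<noteq> 0"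
    using uncountable_disjoint_system_below_weak_unit[OF e D] by blast
  have e_nonneg: "0 \<le> e" using e unfolding weak_unit_def by blast
  obtain i where "i \<in> X" using X(2) by (metis countable_empty equals0I)
  then have "0 \<in> singly_supported X e"
    using X(1) e_nonneg unfolding singly_supported_def
    by (auto simp: inf_absorb1 disjoint_system_nonneg)
  moreover have "is_sup_of (singly_supported X e) e"
    using X(1) \<open>i \<in> X\<close> e_nonneg by (intro is_sup_of_singly_supported[OF arch]) auto
  ultimately obtain B where "B \<subseteq> singly_supported X e" "countable B" "is_sup_of B e"
    using csp[unfolded countable_sup_property_def, rule_format, of "singly_supported X e" e]
    by blast
  then show False using not_is_sup_of_countable_singly_supported[OF X] by blast
qed

lemma linear_topology_continuous_map_line:
  fixes T :: "'a::real_vector topology"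
  assumes "linear_topology T"
  shows "continuous_map euclideanreal T (\<lambda>t. x + t *\<^sub>R v)"
proof -
  have top: "topspace T = UNIV"
    and add: "continuous_map (prod_topology T T) T (\<lambda>(x, y). x + y)"
    and scale: "continuous_map (prod_topology euclideanreal T) T (\<lambda>(c, x). c *\<^sub>R x)"
    using assms unfolding linear_topology_def by auto
  have "continuous_map euclideanreal T (\<lambda>t. t *\<^sub>R v)"
    using continuous_map_compose[OF continuous_map_pairedI[of _ _ id _ "\<lambda>_. v"] scale]
    by (simp add: o_def top)
  then have "continuous_map euclideanreal (prod_topology T T) (\<lambda>t. (x, t *\<^sub>R v))"
    by (intro continuous_map_pairedI) (auto simp: top)
  from continuous_map_compose[OF this add] show ?thesis by (simp add: o_def)
qed

lemma linear_topology_continuous_map_add_const: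
  fixes T :: "'a::real_vector topology"
  assumes "linear_topology T"
  shows "continuous_map T T (\<lambda>y. y + a)"
proof -
  have top: "topspace T = UNIV"
    and add: "continuous_map (prod_topology T T) T (\<lambda>(x, y). x + y)"
    using assms unfolding linear_topology_def by auto
  have "continuous_map T (prod_topology T T) (\<lambda>y. (y, a))"
    by (intro continuous_map_pairedI) (auto simp: top)
  from continuous_map_compose[OF this add] show ?thesis by (simp add: o_def)
qed

lemma (in Metric_space) MCauchy_if_dist_Suc_less_geometric:
  assumes "range \<sigma> \<subseteq> M" and steps: "\<And>n. d (\<sigma> n) (\<sigma> (Suc n)) < (1/2)^n"
  shows "MCauchy \<sigma>"
proof -
  have in_M: "\<sigma> n \<in> M" for n using assms(1) by blast
  have tail: "d (\<sigma> n) (\<sigma> (n + k)) \<le> 2 * (1/2)^n - 2 * (1/2)^(n + k)" for n k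
  proof (induction k)
    case (Suc k)
    have "d (\<sigma> n) (\<sigma> (n + Suc k)) \<le> d (\<sigma> n) (\<sigma> (n + k)) + d (\<sigma> (n + k)) (\<sigma> (n + Suc k))"
      using in_M by (intro triangle) auto
    also have "\<dots> \<le> 2 * (1/2)^n - 2 * (1/2)^(n + Suc k)"
      using Suc steps[of "n + k"] by simp
    finally show ?case .
  qed (simp add: in_M)
  have far: "d (\<sigma> N) (\<sigma> n) \<le> 2 * (1/2)^N" if "N \<le> n" for N n
  proof -
    have "d (\<sigma> N) (\<sigma> n) \<le> 2 * (1/2)^N - 2 * (1/2)^n" using tail[of N "n - N"] that by simp
    moreover have "(0::real) \<le> (1/2)^n" by simp
    ultimately show ?thesis by linarith
  qed
  show ?thesis unfolding MCauchy_def
  proof (intro conjI allI impI)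
    show "range \<sigma> \<subseteq> M" by fact
    fix \<epsilon> :: real assume "\<epsilon> > 0"
    then obtain N where N: "(1/2::real)^N < \<epsilon>/4" using real_arch_pow_inv[of "\<epsilon>/4" "1/2"] by auto
    show "\<exists>N. \<forall>n n'. N \<le> n \<longrightarrow> N \<le> n' \<longrightarrow> d (\<sigma> n) (\<sigma> n') < \<epsilon>"
    proof (intro exI allI impI)
      fix n n' assume "N \<le> n" "N \<le> n'"
      then have "d (\<sigma> n) (\<sigma> n') \<le> d (\<sigma> N) (\<sigma> n) + d (\<sigma> N) (\<sigma> n')"
        using in_M triangle'' by simp
      also have "\<dots> \<le> 4 * (1/2)^N" using far[OF \<open>N \<le> n\<close>] far[OF \<open>N \<le> n'\<close>] by simp
      finally show "d (\<sigma> n) (\<sigma> n') < \<epsilon>" using N by linarith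
    qed
  qed
qed

lemma ex_convergent_positive_series:
  fixes T :: "'a::real_vector topology" and v :: "nat \<Rightarrow> 'a"
  assumes lin: "linear_topology T" and cms: "completely_metrizable_space T"
  obtains c l where "\<forall>n. 0 < c n" "limitin T (\<lambda>N. \<Sum>n<N. c n *\<^sub>R v n) l sequentially"
proof -
  \<comment> \<open>The metric need not be translation invariant, so each coefficient is chosen only once
    the preceding partial sum is known.\<close>
  obtain M m where Mm: "Metric_space M m" "Metric_space.mcomplete M m" "T = Metric_space.mtopology M m"
    using cms unfolding completely_metrizable_space_def by blast
  interpret Metric_space M m by (rule Mm(1))
  have in_M: "x \<in> M" for x using lin Mm(3) unfolding linear_topology_def by simp
  have small: "\<exists>c>0. m x (x + c *\<^sub>R y) < \<epsilon>" if "\<epsilon> > 0" for x y and \<epsilon> :: real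
  proof -
    have "openin euclideanreal {t \<in> topspace euclideanreal. x + t *\<^sub>R y \<in> mball x \<epsilon>}"
      using linear_topology_continuous_map_line[OF lin] Mm(3)
      by (intro openin_continuous_map_preimage) auto
    moreover have "0 \<in> {t. x + t *\<^sub>R y \<in> mball x \<epsilon>}" using in_M that by simp
    ultimately obtain \<delta> where "\<delta> > 0" "ball 0 \<delta> \<subseteq> {t. x + t *\<^sub>R y \<in> mball x \<epsilon>}"
      by (auto elim!: openE)
    then show ?thesis by (intro exI[of _ "\<delta>/2"]) (auto simp: subset_iff)
  qed
  have "\<exists>c. 0 < c \<and> m x (x + c *\<^sub>R v N) < (1/2)^N" for x N
    using small[of "(1/2)^N"] by simp
  then obtain \<gamma> where \<gamma>: "\<And>x N. 0 < \<gamma> x N \<and> m x (x + \<gamma> x N *\<^sub>R v N) < (1/2)^N"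
    by metis
  define s where "s = rec_nat 0 (\<lambda>N x. x + \<gamma> x N *\<^sub>R v N)"
  define c where "c N = \<gamma> (s N) N" for N
  have s_Suc: "s (Suc N) = s N + c N *\<^sub>R v N" for N unfolding s_def c_def by simp
  have s_sum: "s = (\<lambda>N. \<Sum>n<N. c n *\<^sub>R v n)"
  proof
    show "s N = (\<Sum>n<N. c n *\<^sub>R v n)" for N
      by (induction N) (simp_all add: s_Suc, simp add: s_def)
  qed
  have "MCauchy s"
    by (rule MCauchy_if_dist_Suc_less_geometric) (use in_M \<gamma> in \<open>auto simp: s_Suc c_def\<close>)
  then obtain l where "limitin T s l sequentially"
    using Mm(2,3) unfolding mcomplete_def by blast
  moreover have "\<forall>n. 0 < c n" unfolding c_def using \<gamma> by blast
  ultimately show thesis using that unfolding s_sum by blast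
qed

lemma locally_solid_eq_0_if_dominated:
  fixes T :: "'a::{ordered_real_vector, lattice} topology"
  assumes ls: "locally_solid T" and "t1_space T" and lim: "limitin T x l sequentially"
    and dominated: "eventually (\<lambda>n. vabs a \<le> vabs (x n - l)) sequentially"
  shows "a = 0"
proof (rule ccontr)
  assume "a \<noteq> 0"
  have lin: "linear_topology T" using ls unfolding locally_solid_def by blast
  then have top: "topspace T = UNIV" unfolding linear_topology_def by blast
  have "closedin T {a}" using \<open>t1_space T\<close> top by (simp add: closedin_t1_singleton)
  then have "openin T (UNIV - {a})" using top by (simp add: closedin_def)
  moreover have "0 \<in> UNIV - {a}" using \<open>a \<noteq> 0\<close> by simp
  ultimately obtain V where V: "solid V" "V \<subseteq> UNIV - {a}" "\<exists>W. openin T W \<and> 0 \<in> W \<and> W \<subseteq> V"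
    using ls unfolding locally_solid_def by blast
  then obtain W where W: "openin T W" "0 \<in> W" "W \<subseteq> V" by blast
  have "openin T {y \<in> topspace T. y + - l \<in> W}"
    by (rule openin_continuous_map_preimage[OF linear_topology_continuous_map_add_const[OF lin] W(1)])
  moreover have "l \<in> {y \<in> topspace T. y + - l \<in> W}" using W(2) top by simp
  ultimately have "eventually (\<lambda>n. x n \<in> {y \<in> topspace T. y + - l \<in> W}) sequentially"
    using lim unfolding limitin_def by blast
  then have "eventually (\<lambda>n. x n - l \<in> W) sequentially" by (rule eventually_mono) simp
  then have "eventually (\<lambda>n. x n - l \<in> W \<and> vabs a \<le> vabs (x n - l)) sequentially"
    using dominated by (rule eventually_conj)
  then obtain n where "x n - l \<in> W" "vabs a \<le> vabs (x n - l)"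
    unfolding eventually_sequentially by (meson order_refl)
  then have "a \<in> V" using V(1) W(3) unfolding solid_def by blast
  with V(2) show False by blast
qed

lemma weak_unit_pos_part_of_series_limit:
  fixes T :: "'a::{ordered_real_vector, lattice} topology"
  assumes ls: "locally_solid T" and t1: "t1_space T"
    and v_nonneg: "\<forall>n. 0 \<le> v n" and c_pos: "\<forall>n. 0 < c n"
    and lim: "limitin T (\<lambda>N. \<Sum>n<N. c n *\<^sub>R v n) l sequentially"
    and maximal: "\<And>y. 0 \<le> y \<Longrightarrow> \<forall>n. inf y (v n) = 0 \<Longrightarrow> y = 0"
  shows "weak_unit (sup l 0)"
  unfolding weak_unit_def
proof (intro conjI allI impI)
  fix x assume x: "inf (vabs x) (sup l 0) = 0"
  have "inf (vabs x) (v n) = 0" for n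
  proof -
    have "inf (vabs x) (c n *\<^sub>R v n) = 0"
    proof (rule locally_solid_eq_0_if_dominated[OF ls t1 lim])
      have dominated: "vabs (inf (vabs x) (c n *\<^sub>R v n)) \<le> vabs ((\<Sum>i<N. c i *\<^sub>R v i) - l)"
        if "n < N" for N
      proof -
        have "c n *\<^sub>R v n \<le> (\<Sum>i<N. c i *\<^sub>R v i)"
          using that v_nonneg c_pos
          by (intro sum_nonneg_leq_bound[of "{..<N}" "\<lambda>i. c i *\<^sub>R v i"])
            (simp_all add: scaleR_nonneg_nonneg less_imp_le)
        then have "inf (vabs x) (c n *\<^sub>R v n) \<le> vabs ((\<Sum>i<N. c i *\<^sub>R v i) - l)"
          using x by (rule inf_le_vabs_diff_if_disjoint_pos_part[rotated])
        then show ?thesis using v_nonneg c_pos by (simp add: scaleR_nonneg_nonneg less_imp_le)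
      qed
      show "eventually (\<lambda>N. vabs (inf (vabs x) (c n *\<^sub>R v n)) \<le> vabs ((\<Sum>i<N. c i *\<^sub>R v i) - l)) sequentially"
        using eventually_gt_at_top[of n] by (rule eventually_mono) (rule dominated)
    qed
    then have "inf (c n *\<^sub>R v n) (vabs x) = 0" by (simp only: inf_commute)
    then have "inf (inverse (c n) *\<^sub>R (c n *\<^sub>R v n)) (vabs x) = 0"
      by (rule inf_scaleR_left_eq_0) (use c_pos v_nonneg in \<open>simp_all add: less_imp_le scaleR_nonneg_nonneg\<close>)
    moreover have "c n \<noteq> 0" using c_pos by (metis less_irrefl)
    ultimately show ?thesis by (simp add: inf_commute)
  qed
  then have "vabs x = 0" by (intro maximal) simp_all
  then show "x = 0" by simp
qed simp

lemma weak_unit_if_disjoint_systems_countable: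
  fixes T :: "'a::{ordered_real_vector, lattice} topology"
  assumes ls: "locally_solid T" and cms: "completely_metrizable_space T"
    and ccc: "\<forall>D::'a set. disjoint_system D \<longrightarrow> countable D"
  shows "\<exists>e::'a. weak_unit e"
proof -
  have lin: "linear_topology T" using ls unfolding locally_solid_def by blast
  have t1: "t1_space T"
    using cms by (intro Hausdorff_imp_t1_space metrizable_imp_Hausdorff_space completely_metrizable_imp_metrizable_space)
  obtain D :: "'a set" where D: "disjoint_system D" "D \<subseteq> UNIV"
    and maximal: "\<And>w. w \<in> UNIV \<Longrightarrow> 0 \<le> w \<Longrightarrow> \<forall>x\<in>D. inf w x = 0 \<Longrightarrow> w = 0"
    using ex_maximal_disjoint_system[of UNIV] by blast
  define v where "v = from_nat_into (insert 0 D)"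
  have "countable (insert 0 D)" using ccc D(1) by simp
  then have v_range: "range v = insert 0 D" unfolding v_def by simp
  have v_nonneg: "\<forall>n. 0 \<le> v n"
  proof
    fix n
    have "v n \<in> insert 0 D" using v_range by blast
    with D(1) show "0 \<le> v n" by (auto intro: disjoint_system_nonneg)
  qed
  obtain c l where "\<forall>n. 0 < c n" "limitin T (\<lambda>N. \<Sum>n<N. c n *\<^sub>R v n) l sequentially"
    by (rule ex_convergent_positive_series[OF lin cms])
  moreover have "y = 0" if "0 \<le> y" "\<forall>n. inf y (v n) = 0" for y
  proof (rule maximal[OF UNIV_I that(1)], rule ballI)
    fix z assume "z \<in> D"
    then obtain n where "z = v n" using v_range by (metis insertCI rangeE)
    with that(2) show "inf y z = 0" by simp
  qed
  ultimately have "weak_unit (sup l 0)"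
    by (rule weak_unit_pos_part_of_series_limit[OF ls t1 v_nonneg])
  then show ?thesis by blast
qed

theorem theorem4p6:
  fixes T :: "'a::{ordered_real_vector, lattice} topology"
  assumes "archimedean_vl TYPE('a)"
    and "locally_solid T"
    and "completely_metrizable_space T"
  shows "(\<forall>D::'a set. disjoint_system D \<longrightarrow> countable D) \<longleftrightarrow>
         ((\<exists>e::'a. weak_unit e) \<and> countable_sup_property TYPE('a))"
proof
  assume ccc: "\<forall>D::'a set. disjoint_system D \<longrightarrow> countable D"
  show "(\<exists>e::'a. weak_unit e) \<and> countable_sup_property TYPE('a)"
    using weak_unit_if_disjoint_systems_countable[OF assms(2,3) ccc]
      countable_sup_property_if_disjoint_systems_countable[OF assms(1) ccc] by blast
next
  assume "(\<exists>e::'a. weak_unit e) \<and> countable_sup_property TYPE('a)"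
  then show "\<forall>D::'a set. disjoint_system D \<longrightarrow> countable D"
    using disjoint_systems_countable_if_weak_unit[OF assms(1)] by blast
qed

end
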